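(* Let $G=G_1+\dots+G_n$ be a disjunctive sum of dicotic nonzugzwang scoring games, each with all terminal positions numbers. Let $m_i=m(G_i)$ and $\sigma=\max_{1\leq i\leq n}\sigma(G_i)$. Then $$\sum_{i=1}^n m_i-\sigma\leq Rs(G)\leq \sum_{i=1}^n m_i\leq Ls(G)\leq\sum_{i=1}^n m_i+\sigma.$$
   Context: A scoring game is $G=\langle G^L\mid G^R\rangle$ with $G^L,G^R$ finite nonempty sets of scoring games or empty sets decorated with a real, $\emptyset^s$; $\langle\emptyset^s\mid\emptyset^s\rangle$ is the number $s$. $Ls(\langle\emptyset^s\mid G^R\rangle)=s$, $Rs(\langle G^L\mid\emptyset^s\rangle)=s$, otherwise $Ls(G)=\max_{G^l\in G^L}Rs(G^l)$, $Rs(G)=\min_{G^r\in G^R}Ls(G^r)$. Disjunctive sum: Left options of $G_1+G_2$ are all $G_1^l+G_2$, $G_1+G_2^l$ (Left side $\emptyset^{\ell_1+\ell_2}$ if neither has Left options), symmetrically for Right; $H+c$ adds the number $c$ to all terminal scores; $nG$ is the sum of $n$ copies. Dicotic: at every position both players have options or neither; nonzugzwang: $Ls(H)\ge Rs(H)$ at every position. Mean: $m(G)=\lim_{n\to\infty}Ls(nG)/n=\lim_{n\to\infty}Rs(nG)/n$ (exists for dicotic nonzugzwang games). Cooling: if $G$ is a number $k$, $G_t=k$, $\sigma(G)=0$; otherwise $\widetilde G_t=\langle \{G^l_t-t\}\mid \{G^r_t+t\}\rangle$, $t_0=\min\{t\ge0: Ls(\widetilde G_t)=Rs(\widetilde G_t)\}$,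 $G_t=\widetilde G_t$ for $t\le t_0$ and the number $Ls(\widetilde G_{t_0})$ for $t>t_0$; $\sigma(G)=t_0$ is the temperature. *)

theory Defs
  imports Complex_Main
begin

text \<open>If L is empty, the Left side is the decorated empty set with decoration l
(otherwise the real l is irrelevant); similarly for R and r.\<close>

datatype sgame = SG (lopts: "sgame list") (lterm: real) (ropts: "sgame list") (rterm: real)

definition num :: "real \<Rightarrow> sgame" where
  "num s = SG [] s [] s"

definition is_num :: "sgame \<Rightarrow> bool" where
  "is_num G \<longleftrightarrow> lopts G = [] \<and> ropts G = [] \<and> lterm G = rterm G"

fun LRs :: "sgame \<Rightarrow> real \<times> real" where
  "LRs (SG L l R r) =
     ((if L = [] then l else Max (set (map (\<lambda>g. snd (LRs g)) L))),
      (if R = [] then r else Min (set (map (\<lambda>g. fst (LRs g)) R))))"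

definition Ls :: "sgame \<Rightarrow> real" where "Ls G = fst (LRs G)"
definition Rs :: "sgame \<Rightarrow> real" where "Rs G = snd (LRs G)"

fun shift :: "real \<Rightarrow> sgame \<Rightarrow> sgame" where
  "shift c (SG L l R r) = SG (map (shift c) L) (l + c) (map (shift c) R) (r + c)"

function gplus :: "sgame \<Rightarrow> sgame \<Rightarrow> sgame" where
  "gplus (SG L1 l1 R1 r1) (SG L2 l2 R2 r2) =
     SG (map (\<lambda>x. gplus x (SG L2 l2 R2 r2)) L1 @ map (\<lambda>y. gplus (SG L1 l1 R1 r1) y) L2)
        (l1 + l2)
        (map (\<lambda>x. gplus x (SG L2 l2 R2 r2)) R1 @ map (\<lambda>y. gplus (SG L1 l1 R1 r1) y) R2)
        (r1 + r2)"
  by pat_completeness auto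
termination
  by (relation "measure (\<lambda>(a, b). size a + size b)")
     (auto dest!: size_list_estimation'[OF _ le_refl, where f = size] simp: less_Suc_eq_le)

fun gsum :: "sgame list \<Rightarrow> sgame" where
  "gsum [] = num 0"
| "gsum [g] = g"
| "gsum (g # gs) = gplus g (gsum gs)"

fun ncopies :: "nat \<Rightarrow> sgame \<Rightarrow> sgame" where
  "ncopies 0 G = num 0"
| "ncopies (Suc 0) G = G"
| "ncopies (Suc n) G = gplus G (ncopies n G)"

fun positions :: "sgame \<Rightarrow> sgame set" where
  "positions (SG L l R r) =
     insert (SG L l R r) ((\<Union>g\<in>set L. positions g) \<union> (\<Union>g\<in>set R. positions g))"

definition dicotic :: "sgame \<Rightarrow> bool" where
  "dicotic G \<longleftrightarrow> (\<forall>H\<in>positions G. (lopts H = []) \<longleftrightarrow> (ropts H = []))"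

definition nonzugzwang :: "sgame \<Rightarrow> bool" where
  "nonzugzwang G \<longleftrightarrow> (\<forall>H\<in>positions G. Ls H \<ge> Rs H)"

definition terminal_numbers :: "sgame \<Rightarrow> bool" where
  "terminal_numbers G \<longleftrightarrow>
     (\<forall>H\<in>positions G. lopts H = [] \<and> ropts H = [] \<longrightarrow> is_num H)"

definition mean :: "sgame \<Rightarrow> real" where
  "mean G = lim (\<lambda>n. Ls (ncopies n G) / real n)"

fun cool :: "sgame \<Rightarrow> real \<Rightarrow> sgame" where
  "cool (SG L l R r) =
     (if L = [] \<and> R = [] \<and> l = r then (\<lambda>t. num l)
      else (\<lambda>t. let tl = (\<lambda>s. SG (map (\<lambda>g. shift (- s) (cool g s)) L) l
                                  (map (\<lambda>g. shift s (cool g s)) R) r);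
                    t0 = (LEAST s. 0 \<le> s \<and> Ls (tl s) = Rs (tl s))
                in if t \<le> t0 then tl t else num (Ls (tl t0))))"

definition cool_tilde :: "sgame \<Rightarrow> real \<Rightarrow> sgame" where
  "cool_tilde G s = SG (map (\<lambda>g. shift (- s) (cool g s)) (lopts G)) (lterm G)
                       (map (\<lambda>g. shift s (cool g s)) (ropts G)) (rterm G)"

definition temp :: "sgame \<Rightarrow> real" where
  "temp G = (if is_num G then 0
             else (LEAST s. 0 \<le> s \<and> Ls (cool_tilde G s) = Rs (cool_tilde G s)))"

end

theory Submission
  imports Defs "HOL-Analysis.Lipschitz"
begin

text \<open>Cooling every component of a sum by \<open>t\<close> moves the scores of the sum by at most \<open>t\<close>:
  \<open>Ls (\<Sum>G\<^sub>i\<^sub>,\<^sub>t) \<le> Ls (\<Sum>G\<^sub>i) \<le> Ls (\<Sum>G\<^sub>i\<^sub>,\<^sub>t) + t\<close> and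
  \<open>Rs (\<Sum>G\<^sub>i\<^sub>,\<^sub>t) - t \<le> Rs (\<Sum>G\<^sub>i) \<le> Rs (\<Sum>G\<^sub>i\<^sub>,\<^sub>t)\<close>.
  This follows by induction on the sum: a move in a component that is still hot at \<open>t\<close> corresponds
  to a move of the cooled sum shifted by \<open>t\<close>, and a move in a component that has already frozen is
  controlled by the number it has frozen to. For \<open>t\<close> above every temperature each \<open>G\<^sub>i\<^sub>,\<^sub>t\<close> is a
  number \<open>f\<^sub>i\<close>, so the cooled sum is the number \<open>\<Sum>f\<^sub>i\<close> and the bounds take the claimed form
  with \<open>f\<^sub>i\<close> in place of \<open>m(G\<^sub>i)\<close>. Applied to \<open>n\<close> copies of \<open>G\<^sub>i\<close> they give
  \<open>n f\<^sub>i \<le> Ls (n G\<^sub>i) \<le> n f\<^sub>i + \<sigma>(G\<^sub>i)\<close>, hence \<open>m(G\<^sub>i) = f\<^sub>i\<close>.\<close>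

lemma Ls_eq: "Ls G = (if lopts G = [] then lterm G else Max (Rs ` set (lopts G)))"
  by (cases G) (simp add: Ls_def Rs_def image_image)

lemma Rs_eq: "Rs G = (if ropts G = [] then rterm G else Min (Ls ` set (ropts G)))"
  by (cases G) (simp add: Ls_def Rs_def image_image)

lemma Rs_lopt_le_Ls: "x \<in> set (lopts G) \<Longrightarrow> Rs x \<le> Ls G"
  by (auto simp: Ls_eq)

lemma Rs_le_Ls_ropt: "x \<in> set (ropts G) \<Longrightarrow> Rs G \<le> Ls x"
  by (auto simp: Rs_eq)

lemma Ls_le_iff: "lopts G \<noteq> [] \<Longrightarrow> Ls G \<le> c \<longleftrightarrow> (\<forall>x\<in>set (lopts G). Rs x \<le> c)"
  by (simp add: Ls_eq)

lemma Rs_ge_iff: "ropts G \<noteq> [] \<Longrightarrow> c \<le> Rs G \<longleftrightarrow> (\<forall>x\<in>set (ropts G). c \<le> Ls x)"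
  by (simp add: Rs_eq)

lemma obtain_best_lopt:
  assumes "lopts G \<noteq> []"
  obtains x where "x \<in> set (lopts G)" "Ls G = Rs x"
proof -
  have "Max (Rs ` set (lopts G)) \<in> Rs ` set (lopts G)"
    using assms by (intro Max_in) auto
  then obtain x where "x \<in> set (lopts G)" "Max (Rs ` set (lopts G)) = Rs x" by blast
  with assms that show ?thesis by (simp add: Ls_eq)
qed

lemma obtain_best_ropt:
  assumes "ropts G \<noteq> []"
  obtains x where "x \<in> set (ropts G)" "Rs G = Ls x"
proof -
  have "Min (Ls ` set (ropts G)) \<in> Ls ` set (ropts G)"
    using assms by (intro Min_in) auto
  then obtain x where "x \<in> set (ropts G)" "Min (Ls ` set (ropts G)) = Ls x" by blast
  with assms that show ?thesis by (simp add: Rs_eq)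
qed

lemma size_lopt_less: "x \<in> set (lopts G) \<Longrightarrow> size x < size G"
  and size_ropt_less: "x \<in> set (ropts G) \<Longrightarrow> size x < size G"
  by (cases G; auto dest!: size_list_estimation'[OF _ le_refl, where f = size]
      simp: less_Suc_eq_le)+

lemma num_sel [simp]:
  "lopts (num c) = []" "ropts (num c) = []" "lterm (num c) = c" "rterm (num c) = c"
  by (simp_all add: num_def)

lemma is_num_num [simp]: "is_num (num c)"
  by (simp add: is_num_def)

lemma Ls_num [simp]: "Ls (num c) = c" and Rs_num [simp]: "Rs (num c) = c"
  by (simp_all add: Ls_eq Rs_eq)

lemma is_num_eq: "is_num G \<Longrightarrow> G = num (lterm G)"
  by (cases G) (auto simp: is_num_def num_def)

lemma Rs_is_num: "is_num G \<Longrightarrow> Rs G = Ls G"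
  by (metis is_num_eq Ls_num Rs_num)

lemma shift_sel [simp]:
  "lopts (shift c G) = map (shift c) (lopts G)" "ropts (shift c G) = map (shift c) (ropts G)"
  "lterm (shift c G) = lterm G + c" "rterm (shift c G) = rterm G + c"
  by (cases G; simp)+

lemma Ls_Rs_shift: "Ls (shift c G) = Ls G + c \<and> Rs (shift c G) = Rs G + c"
proof (induction G)
  case (SG L l R r)
  then have "Rs ` set (map (shift c) L) = (\<lambda>x. Rs x + c) ` set L"
    and "Ls ` set (map (shift c) R) = (\<lambda>x. Ls x + c) ` set R"
    by (auto simp: image_image)
  then show ?case
    by (simp add: Ls_eq[of "shift c _"] Rs_eq[of "shift c _"] Ls_eq[of "SG L l R r"]
        Rs_eq[of "SG L l R r"] Max_add_commute Min_add_commute del: shift.simps)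
qed

lemma Ls_shift [simp]: "Ls (shift c G) = Ls G + c" and Rs_shift [simp]: "Rs (shift c G) = Rs G + c"
  using Ls_Rs_shift by auto

lemma shift_0 [simp]: "shift 0 G = G"
  by (induction G) (auto intro: map_idI)

lemma is_num_shift [simp]: "is_num (shift c G) \<longleftrightarrow> is_num G"
  by (simp add: is_num_def)

lemma gplus_sel [simp]:
  "lopts (gplus a b) = map (\<lambda>x. gplus x b) (lopts a) @ map (gplus a) (lopts b)"
  "ropts (gplus a b) = map (\<lambda>x. gplus x b) (ropts a) @ map (gplus a) (ropts b)"
  "lterm (gplus a b) = lterm a + lterm b"
  "rterm (gplus a b) = rterm a + rterm b"
  by (cases a; cases b; simp)+

lemma gplus_induct:
  assumes "\<And>a b. (\<And>x. x \<in> set (lopts a) \<union> set (ropts a) \<Longrightarrow> P x b)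
    \<Longrightarrow> (\<And>y. y \<in> set (lopts b) \<union> set (ropts b) \<Longrightarrow> P a y) \<Longrightarrow> P a b"
  shows "P a b"
proof (induction a b rule: gplus.induct)
  case (1 L1 l1 R1 r1 L2 l2 R2 r2)
  show ?case by (rule assms) (use 1 in auto)
qed

lemma gplus_shift_left: "gplus (shift c a) b = shift c (gplus a b)"
  by (induction a b rule: gplus.induct) (simp add: algebra_simps)

lemma gplus_shift_right: "gplus a (shift c b) = shift c (gplus a b)"
  by (induction a b rule: gplus.induct) (simp add: algebra_simps)

lemma gplus_num_left: "gplus (num c) b = shift c b"
  by (induction b) (simp add: num_def algebra_simps)

lemma gplus_num_right: "gplus a (num c) = shift c a"
  by (induction a) (simp add: num_def)

lemma gplus_is_num_left: "is_num a \<Longrightarrow> gplus a b = shift (Ls a) b"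
  by (metis is_num_eq gplus_num_left Ls_num)

lemma gplus_is_num_right: "is_num b \<Longrightarrow> gplus a b = shift (Ls b) a"
  by (metis is_num_eq gplus_num_right Ls_num)

lemma gsum_Cons: "gsum (a # gs) = gplus a (gsum gs)"
  by (cases gs) (simp_all add: gplus_num_right)

lemma gsum_update_shift: "j < length gs \<Longrightarrow> gsum (gs[j := shift c x]) = shift c (gsum (gs[j := x]))"
  by (induction gs arbitrary: j)
    (auto simp: gsum_Cons gplus_shift_left gplus_shift_right split: nat.split)

lemma lterm_gsum: "lterm (gsum gs) = (\<Sum>g\<leftarrow>gs. lterm g)"
  and rterm_gsum: "rterm (gsum gs) = (\<Sum>g\<leftarrow>gs. rterm g)"
  by (induction gs) (simp_all add: gsum_Cons)

lemma lopts_gsum_Nil: "lopts (gsum gs) = [] \<longleftrightarrow> (\<forall>g\<in>set gs. lopts g = [])"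
  and ropts_gsum_Nil: "ropts (gsum gs) = [] \<longleftrightarrow> (\<forall>g\<in>set gs. ropts g = [])"
  by (induction gs) (simp_all add: gsum_Cons)

lemma set_opts_gsum:
  assumes opts_gplus: "\<And>a b. opts (gplus a b) = map (\<lambda>x. gplus x b) (opts a) @ map (gplus a) (opts b)"
    and opts_num: "opts (num 0) = []"
  shows "set (opts (gsum gs)) = {gsum (gs[j := x]) | j x. j < length gs \<and> x \<in> set (opts (gs ! j))}"
proof (induction gs)
  case Nil
  then show ?case by (simp add: opts_num)
next
  case (Cons a gs)
  have split: "{f j x | j x. j < length (a # gs) \<and> P j x}
      = {f 0 x | x. P 0 x} \<union> {f (Suc k) x | k x. k < length gs \<and> P (Suc k) x}"
    for f :: "nat \<Rightarrow> sgame \<Rightarrow> sgame" and P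
    by (auto simp: less_Suc_eq_0_disj)
  have "set (opts (gsum (a # gs)))
      = {gsum (x # gs) | x. x \<in> set (opts a)} \<union> gplus a ` set (opts (gsum gs))"
    by (auto simp: gsum_Cons opts_gplus)
  also have "gplus a ` set (opts (gsum gs))
      = {gsum (a # gs[k := x]) | k x. k < length gs \<and> x \<in> set (opts (gs ! k))}"
    unfolding Cons.IH by (auto simp: gsum_Cons)
  also have "{gsum (x # gs) | x. x \<in> set (opts a)} \<union> \<dots>
      = {gsum ((a # gs)[j := x]) | j x. j < length (a # gs) \<and> x \<in> set (opts ((a # gs) ! j))}"
    unfolding split by simp
  finally show ?case .
qed

lemmas lopts_gsum = set_opts_gsum[of lopts, simplified]
lemmas ropts_gsum = set_opts_gsum[of ropts, simplified]

lemma lopt_gsum_update: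
    "j < length gs \<Longrightarrow> x \<in> set (lopts (gs ! j)) \<Longrightarrow> gsum (gs[j := x]) \<in> set (lopts (gsum gs))"
  and ropt_gsum_update:
    "j < length gs \<Longrightarrow> x \<in> set (ropts (gs ! j)) \<Longrightarrow> gsum (gs[j := x]) \<in> set (ropts (gsum gs))"
  by (auto simp: lopts_gsum ropts_gsum)

lemma obtain_mset_update_match:
  assumes "mset xs = mset ys" "j < length xs"
  obtains k where "k < length ys" "ys ! k = xs ! j" "\<And>x. mset (xs[j := x]) = mset (ys[k := x])"
proof -
  have "xs ! j \<in> set ys" by (metis assms nth_mem set_mset_mset)
  then obtain k where "k < length ys" "ys ! k = xs ! j" by (metis in_set_conv_nth)
  with assms that show ?thesis by (simp add: mset_update)
qed

lemma image_opts_gsum_mset: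
  assumes opts_gplus: "\<And>a b. opts (gplus a b) = map (\<lambda>x. gplus x b) (opts a) @ map (gplus a) (opts b)"
    and opts_num: "opts (num 0) = []"
    and mset_eq: "mset xs = mset ys"
    and f_mset: "\<And>j x zs. j < length xs \<Longrightarrow> x \<in> set (opts (xs ! j)) \<Longrightarrow> mset (xs[j := x]) = mset zs
      \<Longrightarrow> f (gsum (xs[j := x])) = f (gsum zs)"
  shows "f ` set (opts (gsum xs)) = f ` set (opts (gsum ys))"
proof
  note opts_gsum = set_opts_gsum[of opts, OF opts_gplus opts_num]
  show "f ` set (opts (gsum xs)) \<subseteq> f ` set (opts (gsum ys))"
  proof
    fix v assume "v \<in> f ` set (opts (gsum xs))"
    then obtain j x where j: "j < length xs" "x \<in> set (opts (xs ! j))" "v = f (gsum (xs[j := x]))"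
      unfolding opts_gsum by blast
    obtain k where k: "k < length ys" "ys ! k = xs ! j" "mset (xs[j := x]) = mset (ys[k := x])"
      using obtain_mset_update_match[OF mset_eq j(1)] by metis
    have "gsum (ys[k := x]) \<in> set (opts (gsum ys))"
      unfolding opts_gsum using k j(2) by force
    moreover have "v = f (gsum (ys[k := x]))" using j f_mset[OF j(1,2) k(3)] by simp
    ultimately show "v \<in> f ` set (opts (gsum ys))" by blast
  qed
  show "f ` set (opts (gsum ys)) \<subseteq> f ` set (opts (gsum xs))"
  proof
    fix v assume "v \<in> f ` set (opts (gsum ys))"
    then obtain k x where k: "k < length ys" "x \<in> set (opts (ys ! k))" "v = f (gsum (ys[k := x]))"
      unfolding opts_gsum by blast
    obtain j where j: "j < length xs" "xs ! j = ys ! k" "mset (ys[k := x]) = mset (xs[j := x])"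
      using obtain_mset_update_match[OF mset_eq[symmetric] k(1)] by metis
    have "gsum (xs[j := x]) \<in> set (opts (gsum xs))"
      unfolding opts_gsum using j k(2) by force
    moreover have "v = f (gsum (xs[j := x]))" using k f_mset[OF j(1) _ j(3)[symmetric]] j(2) by simp
    ultimately show "v \<in> f ` set (opts (gsum xs))" by blast
  qed
qed

lemma gsum_mset: "mset xs = mset ys \<Longrightarrow> Ls (gsum xs) = Ls (gsum ys) \<and> Rs (gsum xs) = Rs (gsum ys)"
proof (induction "size (gsum xs)" arbitrary: xs ys rule: less_induct)
  case less
  have IH: "Ls (gsum (xs[j := x])) = Ls (gsum zs) \<and> Rs (gsum (xs[j := x])) = Rs (gsum zs)"
    if "j < length xs" "x \<in> set (lopts (xs ! j)) \<union> set (ropts (xs ! j))" "mset (xs[j := x]) = mset zs"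
    for j x zs
    using that by (intro less.hyps)
      (auto intro: size_lopt_less size_ropt_less lopt_gsum_update ropt_gsum_update)
  have "Rs ` set (lopts (gsum xs)) = Rs ` set (lopts (gsum ys))"
    using less.prems IH by (intro image_opts_gsum_mset[of lopts]) auto
  moreover have "Ls ` set (ropts (gsum xs)) = Ls ` set (ropts (gsum ys))"
    using less.prems IH by (intro image_opts_gsum_mset[of ropts]) auto
  moreover have "set xs = set ys"
    by (metis less.prems set_mset_mset)
  moreover have "lterm (gsum xs) = lterm (gsum ys)" "rterm (gsum xs) = rterm (gsum ys)"
    unfolding lterm_gsum rterm_gsum by (metis less.prems mset_map sum_mset_sum_list)+
  ultimately show ?case
    by (simp add: Ls_eq[of "gsum xs"] Ls_eq[of "gsum ys"] Rs_eq[of "gsum xs"] Rs_eq[of "gsum ys"]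
        lopts_gsum_Nil ropts_gsum_Nil)
qed

lemma obtain_gsum_update_rest:
  assumes "j < length gs"
  obtains rest where "set rest \<subseteq> set gs"
    "\<And>x. Ls (gsum (gs[j := x])) = Ls (gplus x (gsum rest))
      \<and> Rs (gsum (gs[j := x])) = Rs (gplus x (gsum rest))"
proof -
  obtain rest where rest: "mset rest = mset gs - {#gs ! j#}"
    using ex_mset by blast
  have "mset (gs[j := x]) = mset (x # rest)" for x
    using assms by (simp add: mset_update rest)
  then have "Ls (gsum (gs[j := x])) = Ls (gplus x (gsum rest))
      \<and> Rs (gsum (gs[j := x])) = Rs (gplus x (gsum rest))" for x
    using gsum_mset gsum_Cons by metis
  moreover have "set rest \<subseteq> set gs"
    by (metis rest set_mset_mset in_diffD subsetI)
  ultimately show thesis using that by blast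
qed

section \<open>Dicotic nonzugzwang games\<close>

definition dnz :: "sgame \<Rightarrow> bool" where
  "dnz G \<longleftrightarrow> dicotic G \<and> nonzugzwang G \<and> terminal_numbers G"

lemma positions_eq:
  "positions G = insert G ((\<Union>x\<in>set (lopts G). positions x) \<union> (\<Union>x\<in>set (ropts G). positions x))"
  by (cases G) simp

lemma dnz_iff:
  "dnz G \<longleftrightarrow> (lopts G = [] \<longleftrightarrow> ropts G = []) \<and> Rs G \<le> Ls G \<and> (lopts G = [] \<longrightarrow> is_num G)
    \<and> (\<forall>x\<in>set (lopts G). dnz x) \<and> (\<forall>x\<in>set (ropts G). dnz x)"
  unfolding dnz_def dicotic_def nonzugzwang_def terminal_numbers_def positions_eq[of G]
  by (auto simp: is_num_def)

lemma dnz_nonzugzwang: "dnz G \<Longrightarrow> Rs G \<le> Ls G"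
  and dnz_lopt: "dnz G \<Longrightarrow> x \<in> set (lopts G) \<Longrightarrow> dnz x"
  and dnz_ropt: "dnz G \<Longrightarrow> x \<in> set (ropts G) \<Longrightarrow> dnz x"
  and dnz_lopts_Nil: "dnz G \<Longrightarrow> lopts G = [] \<longleftrightarrow> is_num G"
  and dnz_ropts_Nil: "dnz G \<Longrightarrow> ropts G = [] \<longleftrightarrow> is_num G"
  by (auto simp: dnz_iff[of G] is_num_def)

lemma dnz_num [simp]: "dnz (num c)"
  by (simp add: dnz_iff[of "num c"])

lemma dnz_shift: "dnz G \<Longrightarrow> dnz (shift c G)"
proof (induction G)
  case (SG L l R r)
  then show ?case
    unfolding dnz_iff[of "shift c (SG L l R r)"] dnz_iff[of "SG L l R r"]
    by (auto simp del: shift.simps)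
qed

lemma Ls_Rs_gplus_le:
  assumes "dnz a" "dnz b"
  shows "Ls (gplus a b) \<le> Ls a + Ls b \<and> Rs (gplus a b) \<le> Rs a + Ls b \<and> Rs (gplus a b) \<le> Ls a + Rs b"
  using assms
proof (induction a b rule: gplus_induct)
  case (1 a b)
  show ?case
  proof (cases "is_num a \<or> is_num b")
    case True
    have "Rs a \<le> Ls a" "Rs b \<le> Ls b"
      using "1.prems" by (simp_all add: dnz_nonzugzwang)
    with True show ?thesis
      by (elim disjE) (simp_all add: gplus_is_num_left gplus_is_num_right Rs_is_num)
  next
    case False
    with "1.prems" have ne: "lopts a \<noteq> []" "ropts a \<noteq> []" "lopts b \<noteq> []" "ropts b \<noteq> []"
      by (auto simp: dnz_lopts_Nil dnz_ropts_Nil)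
    have IHa: "Ls (gplus x b) \<le> Ls x + Ls b \<and> Rs (gplus x b) \<le> Rs x + Ls b"
      if "x \<in> set (lopts a) \<union> set (ropts a)" for x
      using "1.IH"(1)[OF that] "1.prems" that dnz_lopt[of a x] dnz_ropt[of a x] by blast
    have IHb: "Ls (gplus a y) \<le> Ls a + Ls y \<and> Rs (gplus a y) \<le> Ls a + Rs y"
      if "y \<in> set (lopts b) \<union> set (ropts b)" for y
      using "1.IH"(2)[OF that] "1.prems" that dnz_lopt[of b y] dnz_ropt[of b y] by blast
    have "Rs z \<le> Ls a + Ls b" if "z \<in> set (lopts (gplus a b))" for z
      using that IHa IHb Rs_lopt_le_Ls[of _ a] Rs_lopt_le_Ls[of _ b] by fastforce
    then have "Ls (gplus a b) \<le> Ls a + Ls b"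
      using ne by (simp add: Ls_le_iff)
    moreover have "Rs (gplus a b) \<le> Rs a + Ls b"
    proof -
      obtain x where x: "x \<in> set (ropts a)" "Rs a = Ls x"
        using obtain_best_ropt ne(2) by blast
      then have "Rs (gplus a b) \<le> Ls (gplus x b)"
        by (intro Rs_le_Ls_ropt) simp
      with x IHa show ?thesis by fastforce
    qed
    moreover have "Rs (gplus a b) \<le> Ls a + Rs b"
    proof -
      obtain y where y: "y \<in> set (ropts b)" "Rs b = Ls y"
        using obtain_best_ropt ne(4) by blast
      then have "Rs (gplus a b) \<le> Ls (gplus a y)"
        by (intro Rs_le_Ls_ropt) simp
      with y IHb show ?thesis by fastforce
    qed
    ultimately show ?thesis by blast
  qed
qed

lemma Ls_Rs_gplus_ge:
  assumes "dnz a" "dnz b"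
  shows "Rs a + Rs b \<le> Rs (gplus a b) \<and> Ls a + Rs b \<le> Ls (gplus a b) \<and> Rs a + Ls b \<le> Ls (gplus a b)"
  using assms
proof (induction a b rule: gplus_induct)
  case (1 a b)
  show ?case
  proof (cases "is_num a \<or> is_num b")
    case True
    have "Rs a \<le> Ls a" "Rs b \<le> Ls b"
      using "1.prems" by (simp_all add: dnz_nonzugzwang)
    with True show ?thesis
      by (elim disjE) (simp_all add: gplus_is_num_left gplus_is_num_right Rs_is_num)
  next
    case False
    with "1.prems" have ne: "lopts a \<noteq> []" "ropts a \<noteq> []" "lopts b \<noteq> []" "ropts b \<noteq> []"
      by (auto simp: dnz_lopts_Nil dnz_ropts_Nil)
    have IHa: "Rs x + Rs b \<le> Rs (gplus x b) \<and> Ls x + Rs b \<le> Ls (gplus x b)"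
      if "x \<in> set (lopts a) \<union> set (ropts a)" for x
      using "1.IH"(1)[OF that] "1.prems" that dnz_lopt[of a x] dnz_ropt[of a x] by blast
    have IHb: "Rs a + Rs y \<le> Rs (gplus a y) \<and> Rs a + Ls y \<le> Ls (gplus a y)"
      if "y \<in> set (lopts b) \<union> set (ropts b)" for y
      using "1.IH"(2)[OF that] "1.prems" that dnz_lopt[of b y] dnz_ropt[of b y] by blast
    have "Rs a + Rs b \<le> Ls z" if "z \<in> set (ropts (gplus a b))" for z
      using that IHa IHb Rs_le_Ls_ropt[of _ a] Rs_le_Ls_ropt[of _ b] by fastforce
    then have "Rs a + Rs b \<le> Rs (gplus a b)"
      using ne by (simp add: Rs_ge_iff)
    moreover have "Ls a + Rs b \<le> Ls (gplus a b)"
    proof -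
      obtain x where x: "x \<in> set (lopts a)" "Ls a = Rs x"
        using obtain_best_lopt ne(1) by blast
      then have "Rs (gplus x b) \<le> Ls (gplus a b)"
        by (intro Rs_lopt_le_Ls) simp
      with x IHa show ?thesis by fastforce
    qed
    moreover have "Rs a + Ls b \<le> Ls (gplus a b)"
    proof -
      obtain y where y: "y \<in> set (lopts b)" "Ls b = Rs y"
        using obtain_best_lopt ne(3) by blast
      then have "Rs (gplus a y) \<le> Ls (gplus a b)"
        by (intro Rs_lopt_le_Ls) simp
      with y IHb show ?thesis by fastforce
    qed
    ultimately show ?thesis by blast
  qed
qed

lemma dnz_gplus: "dnz a \<Longrightarrow> dnz b \<Longrightarrow> dnz (gplus a b)"
proof (induction a b rule: gplus_induct)
  case (1 a b)
  have dicotic: "lopts (gplus a b) = [] \<longleftrightarrow> ropts (gplus a b) = []"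
    using "1.prems" by (simp add: dnz_lopts_Nil dnz_ropts_Nil)
  have "Rs (gplus a b) \<le> Ls (gplus a b)"
    using Ls_Rs_gplus_le[OF "1.prems"] Ls_Rs_gplus_ge[OF "1.prems"] by linarith
  moreover have "lopts (gplus a b) = [] \<longrightarrow> is_num (gplus a b)"
    using "1.prems" by (simp add: dnz_lopts_Nil gplus_is_num_left)
  moreover have "dnz x" if "x \<in> set (lopts a) \<union> set (ropts a)" for x
    using that "1.prems"(1) dnz_lopt dnz_ropt by blast
  moreover have "dnz y" if "y \<in> set (lopts b) \<union> set (ropts b)" for y
    using that "1.prems"(2) dnz_lopt dnz_ropt by blast
  ultimately show ?case
    unfolding dnz_iff[of "gplus a b"] using dicotic "1.IH" "1.prems" by auto
qed

lemma dnz_gsum: "\<forall>g\<in>set gs. dnz g \<Longrightarrow> dnz (gsum gs)"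
  by (induction gs) (simp_all add: gsum_Cons dnz_gplus num_def[symmetric])

lemma Ls_gsum_le: "\<forall>g\<in>set gs. dnz g \<Longrightarrow> Ls (gsum gs) \<le> (\<Sum>g\<leftarrow>gs. Ls g)"
proof (induction gs)
  case (Cons a gs)
  then show ?case using Ls_Rs_gplus_le[of a "gsum gs"] by (simp add: gsum_Cons dnz_gsum)
qed (simp add: num_def[symmetric])

lemma Rs_gsum_ge: "\<forall>g\<in>set gs. dnz g \<Longrightarrow> (\<Sum>g\<leftarrow>gs. Rs g) \<le> Rs (gsum gs)"
proof (induction gs)
  case (Cons a gs)
  then show ?case using Ls_Rs_gplus_ge[of a "gsum gs"] by (simp add: gsum_Cons dnz_gsum)
qed (simp add: num_def[symmetric])

section \<open>Cooling\<close>

lemma Max_image_mono: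
  fixes f g :: "'a \<Rightarrow> real"
  shows "finite A \<Longrightarrow> A \<noteq> {} \<Longrightarrow> (\<And>x. x \<in> A \<Longrightarrow> f x \<le> g x) \<Longrightarrow> Max (f ` A) \<le> Max (g ` A)"
  by (subst Max_le_iff) (auto intro: order.trans[OF _ Max_ge])

lemma Min_image_mono:
  fixes f g :: "'a \<Rightarrow> real"
  shows "finite A \<Longrightarrow> A \<noteq> {} \<Longrightarrow> (\<And>x. x \<in> A \<Longrightarrow> f x \<le> g x) \<Longrightarrow> Min (f ` A) \<le> Min (g ` A)"
  by (subst Min_ge_iff) (auto intro: order.trans[OF Min_le])

lemma continuous_on_if_slope_le_1:
  fixes f :: "real \<Rightarrow> real"
  assumes "\<And>s s'. s \<le> s' \<Longrightarrow> \<bar>f s' - f s\<bar> \<le> s' - s"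
  shows "continuous_on UNIV f"
proof (rule lipschitz_on_continuous_on)
  show "1-lipschitz_on UNIV f"
  proof (rule lipschitz_onI)
    fix x y :: real
    show "dist (f x) (f y) \<le> 1 * dist x y"
      using assms[of x y] assms[of y x]
      by (cases "x \<le> y") (auto simp: dist_real_def abs_minus_commute)
  qed simp
qed

lemma Least_crossing:
  fixes f g :: "real \<Rightarrow> real"
  assumes "continuous_on UNIV f" "continuous_on UNIV g" "0 \<le> S" "g 0 \<le> f 0" "f S \<le> g S"
  shows "0 \<le> (LEAST s. 0 \<le> s \<and> f s = g s)
    \<and> f (LEAST s. 0 \<le> s \<and> f s = g s) = g (LEAST s. 0 \<le> s \<and> f s = g s)"
proof -
  define Z where "Z = {0..} \<inter> {s. f s = g s}"
  have "continuous_on {0..S} (\<lambda>s. f s - g s)"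
    using continuous_on_diff[OF assms(1,2)] by (rule continuous_on_subset) simp
  then obtain z where "0 \<le> z" "f z - g z = 0"
    using IVT2'[of "\<lambda>s. f s - g s" S 0 0] assms(3-5) by auto
  then have "Z \<noteq> {}" by (auto simp: Z_def)
  moreover have "bdd_below Z" unfolding Z_def by (rule bdd_belowI[of _ 0]) auto
  moreover have "closed Z"
    unfolding Z_def using assms(1,2) by (intro closed_Int closed_atLeast closed_Collect_eq) auto
  ultimately have "Inf Z \<in> Z" by (rule closed_contains_Inf)
  moreover have "(LEAST s. 0 \<le> s \<and> f s = g s) = Inf Z"
  proof (rule Least_equality)
    show "0 \<le> Inf Z \<and> f (Inf Z) = g (Inf Z)" using \<open>Inf Z \<in> Z\<close> by (simp add: Z_def)
    show "Inf Z \<le> y" if "0 \<le> y \<and> f y = g y" for y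
      using \<open>bdd_below Z\<close> by (rule cInf_lower[rotated]) (use that in \<open>simp add: Z_def\<close>)
  qed
  ultimately show ?thesis by (simp add: Z_def)
qed

lemma cool_eq:
  "cool G t = (if is_num G then G else if t \<le> temp G then cool_tilde G t
     else num (Ls (cool_tilde G (temp G))))"
  by (cases G) (simp add: cool_tilde_def is_num_def temp_def Let_def num_def)

declare cool.simps [simp del]

lemma cool_tilde_sel [simp]:
  "lopts (cool_tilde G s) = map (\<lambda>x. shift (- s) (cool x s)) (lopts G)"
  "ropts (cool_tilde G s) = map (\<lambda>x. shift s (cool x s)) (ropts G)"
  "lterm (cool_tilde G s) = lterm G" "rterm (cool_tilde G s) = rterm G"
  by (simp_all add: cool_tilde_def)

lemma cool_is_num: "is_num G \<Longrightarrow> cool G t = G"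
  by (simp add: cool_eq)

lemma temp_is_num: "is_num G \<Longrightarrow> temp G = 0"
  by (simp add: temp_def)

lemma cool_tilde_0:
  assumes "\<And>x. x \<in> set (lopts G) \<union> set (ropts G) \<Longrightarrow> cool x 0 = x"
  shows "cool_tilde G 0 = G"
proof -
  have "map (\<lambda>x. shift (- 0) (cool x 0)) (lopts G) = lopts G"
    and "map (\<lambda>x. shift 0 (cool x 0)) (ropts G) = ropts G"
    by (auto intro!: map_idI simp: assms)
  then show ?thesis by (cases G) (simp add: cool_tilde_def)
qed

lemma Ls_cool_tilde_Nil: "lopts G = [] \<Longrightarrow> Ls (cool_tilde G s) = lterm G"
  and Rs_cool_tilde_Nil: "ropts G = [] \<Longrightarrow> Rs (cool_tilde G s) = rterm G"
  by (simp_all add: Ls_eq Rs_eq)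

lemma Ls_cool_tilde:
  "lopts G \<noteq> [] \<Longrightarrow> Ls (cool_tilde G s) = Max ((\<lambda>x. Rs (cool x s) - s) ` set (lopts G))"
  by (simp add: Ls_eq image_image)

lemma Ls_cool_tilde_plus:
  "lopts G \<noteq> [] \<Longrightarrow> Ls (cool_tilde G s) + s = Max ((\<lambda>x. Rs (cool x s)) ` set (lopts G))"
  using Max_add_commute[of "set (lopts G)" "\<lambda>x. Rs (cool x s) - s" s] by (simp add: Ls_cool_tilde)

lemma Rs_cool_tilde:
  "ropts G \<noteq> [] \<Longrightarrow> Rs (cool_tilde G s) = Min ((\<lambda>x. Ls (cool x s) + s) ` set (ropts G))"
  by (simp add: Rs_eq image_image)

lemma Rs_cool_tilde_minus:
  "ropts G \<noteq> [] \<Longrightarrow> Rs (cool_tilde G s) - s = Min ((\<lambda>x. Ls (cool x s)) ` set (ropts G))"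
  using Min_add_commute[of "set (ropts G)" "\<lambda>x. Ls (cool x s)" s] by (simp add: Rs_cool_tilde)

definition cooling_mono :: "(real \<Rightarrow> sgame) \<Rightarrow> bool" where
  "cooling_mono F \<longleftrightarrow> (\<forall>s s'. s \<le> s' \<longrightarrow> Ls (F s') \<le> Ls (F s) \<and> Ls (F s) + s \<le> Ls (F s') + s'
      \<and> Rs (F s) \<le> Rs (F s') \<and> Rs (F s') - s' \<le> Rs (F s) - s)"

lemma cooling_mono_continuous:
  assumes "cooling_mono F"
  shows "continuous_on UNIV (\<lambda>s. Ls (F s))" "continuous_on UNIV (\<lambda>s. Rs (F s))"
proof -
  have "\<bar>Ls (F s') - Ls (F s)\<bar> \<le> s' - s \<and> \<bar>Rs (F s') - Rs (F s)\<bar> \<le> s' - s" if "s \<le> s'" for s s'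
    using assms[unfolded cooling_mono_def, rule_format, OF that] by (simp add: abs_le_iff)
  then show "continuous_on UNIV (\<lambda>s. Ls (F s))" "continuous_on UNIV (\<lambda>s. Rs (F s))"
    by (auto intro: continuous_on_if_slope_le_1)
qed

lemma cooling_mono_freeze:
  assumes "cooling_mono F" "\<And>s. Ls (H s) = Ls (F (min s T)) \<and> Rs (H s) = Rs (F (min s T))"
  shows "cooling_mono H"
  unfolding cooling_mono_def
proof (intro allI impI)
  fix s s' :: real
  assume "s \<le> s'"
  then have "min s T \<le> min s' T" "min s' T - min s T \<le> s' - s"
    by (auto simp: min_def)
  with assms(1)[unfolded cooling_mono_def, rule_format, of "min s T" "min s' T"]
    assms(2)[of s] assms(2)[of s']
  show "Ls (H s') \<le> Ls (H s) \<and> Ls (H s) + s \<le> Ls (H s') + s'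
    \<and> Rs (H s) \<le> Rs (H s') \<and> Rs (H s') - s' \<le> Rs (H s) - s"
    by auto
qed

lemma cooling_mono_cool_tilde:
  assumes "\<forall>x\<in>set (lopts G) \<union> set (ropts G). cooling_mono (cool x)"
  shows "cooling_mono (cool_tilde G)"
  unfolding cooling_mono_def
proof (intro allI impI conjI)
  fix s s' :: real
  assume "s \<le> s'"
  then have opt_mono: "Ls (cool x s') \<le> Ls (cool x s) \<and> Ls (cool x s) + s \<le> Ls (cool x s') + s'
      \<and> Rs (cool x s) \<le> Rs (cool x s') \<and> Rs (cool x s') - s' \<le> Rs (cool x s) - s"
    if "x \<in> set (lopts G) \<union> set (ropts G)" for x
    using assms that unfolding cooling_mono_def by blast
  show "Ls (cool_tilde G s') \<le> Ls (cool_tilde G s)"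
  proof (cases "lopts G = []")
    case False
    show ?thesis
      unfolding Ls_cool_tilde[OF False] using opt_mono False by (intro Max_image_mono) auto
  qed (simp add: Ls_cool_tilde_Nil)
  show "Ls (cool_tilde G s) + s \<le> Ls (cool_tilde G s') + s'"
  proof (cases "lopts G = []")
    case False
    show ?thesis
      unfolding Ls_cool_tilde_plus[OF False] using opt_mono False by (intro Max_image_mono) auto
  qed (simp add: Ls_cool_tilde_Nil \<open>s \<le> s'\<close>)
  show "Rs (cool_tilde G s) \<le> Rs (cool_tilde G s')"
  proof (cases "ropts G = []")
    case False
    show ?thesis
      unfolding Rs_cool_tilde[OF False] using opt_mono False by (intro Min_image_mono) auto
  qed (simp add: Rs_cool_tilde_Nil)
  show "Rs (cool_tilde G s') - s' \<le> Rs (cool_tilde G s) - s"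
  proof (cases "ropts G = []")
    case False
    show ?thesis
      unfolding Rs_cool_tilde_minus[OF False] using opt_mono False by (intro Min_image_mono) auto
  qed (simp add: Rs_cool_tilde_Nil \<open>s \<le> s'\<close>)
qed

definition regular_cooling :: "sgame \<Rightarrow> bool" where
  "regular_cooling G \<longleftrightarrow> cooling_mono (cool G) \<and> cool G 0 = G \<and> (\<forall>s\<ge>0. dnz (cool G s))"

lemma obtain_cool_tilde_crossed:
  assumes "dnz G" "\<not> is_num G" and opts: "\<forall>x\<in>set (lopts G) \<union> set (ropts G). regular_cooling x"
  obtains S where "0 \<le> S" "Ls (cool_tilde G S) \<le> Rs (cool_tilde G S)"
proof -
  have ne: "lopts G \<noteq> []" "ropts G \<noteq> []"
    using assms(1,2) by (simp_all add: dnz_lopts_Nil dnz_ropts_Nil)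
  define A where "A = Max (Ls ` set (lopts G))"
  define B where "B = Min (Rs ` set (ropts G))"
  define S where "S = \<bar>A - B\<bar>"
  have "0 \<le> S" "A - B \<le> 2 * S"
    by (auto simp: S_def abs_if)
  have opt: "cooling_mono (cool x) \<and> cool x 0 = x \<and> Rs (cool x S) \<le> Ls (cool x S)"
    if "x \<in> set (lopts G) \<union> set (ropts G)" for x
    using opts that \<open>0 \<le> S\<close> by (auto simp: regular_cooling_def dnz_nonzugzwang)
  have "Rs (cool x S) \<le> A" if "x \<in> set (lopts G)" for x
  proof -
    have "Rs (cool x S) \<le> Ls (cool x S)" using opt that by blast
    also have "\<dots> \<le> Ls (cool x 0)" using opt[of x] that \<open>0 \<le> S\<close> unfolding cooling_mono_def by blast
    also have "\<dots> \<le> A" using opt[of x] that by (simp add: A_def)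
    finally show ?thesis .
  qed
  then have "Ls (cool_tilde G S) \<le> A - S"
    using ne(1) by (simp add: Ls_le_iff)
  moreover have "B \<le> Ls (cool x S)" if "x \<in> set (ropts G)" for x
  proof -
    have "B \<le> Rs (cool x 0)" using opt[of x] that by (simp add: B_def)
    also have "\<dots> \<le> Rs (cool x S)" using opt[of x] that \<open>0 \<le> S\<close> unfolding cooling_mono_def by blast
    also have "\<dots> \<le> Ls (cool x S)" using opt that by blast
    finally show ?thesis .
  qed
  then have "B + S \<le> Rs (cool_tilde G S)"
    using ne(2) by (simp add: Rs_ge_iff)
  ultimately have "Ls (cool_tilde G S) \<le> Rs (cool_tilde G S)"
    using \<open>A - B \<le> 2 * S\<close> by linarith
  with \<open>0 \<le> S\<close> show thesis by (rule that)
qed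

lemma temp_crossing:
  assumes "dnz G" "\<not> is_num G" and opts: "\<forall>x\<in>set (lopts G) \<union> set (ropts G). regular_cooling x"
  shows "0 \<le> temp G \<and> Ls (cool_tilde G (temp G)) = Rs (cool_tilde G (temp G))"
proof -
  have "cool_tilde G 0 = G"
    using opts by (intro cool_tilde_0) (auto simp: regular_cooling_def)
  then have "Rs (cool_tilde G 0) \<le> Ls (cool_tilde G 0)"
    using assms(1) by (simp add: dnz_nonzugzwang)
  moreover obtain S where "0 \<le> S" "Ls (cool_tilde G S) \<le> Rs (cool_tilde G S)"
    using obtain_cool_tilde_crossed[OF assms] .
  moreover have "cooling_mono (cool_tilde G)"
    using opts by (intro cooling_mono_cool_tilde) (auto simp: regular_cooling_def)
  ultimately show ?thesis
    using Least_crossing[OF cooling_mono_continuous] assms(2) by (simp add: temp_def)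
qed

lemma regular_cooling_step:
  assumes "dnz G" "\<not> is_num G" and opts: "\<forall>x\<in>set (lopts G) \<union> set (ropts G). regular_cooling x"
  shows "regular_cooling G"
proof -
  define T where "T = temp G"
  have T: "0 \<le> T" "Ls (cool_tilde G T) = Rs (cool_tilde G T)"
    using temp_crossing[OF assms] by (simp_all add: T_def)
  have mono: "cooling_mono (cool_tilde G)"
    using opts by (intro cooling_mono_cool_tilde) (auto simp: regular_cooling_def)
  have cool_G: "cool G s = (if s \<le> T then cool_tilde G s else num (Ls (cool_tilde G T)))" for s
    using assms(2) by (simp add: cool_eq T_def)
  have "cooling_mono (cool G)"
    by (rule cooling_mono_freeze[OF mono, of _ T]) (simp add: cool_G min_def T(2))
  moreover have "cool G 0 = G"
    using cool_G T(1) cool_tilde_0[of G] opts by (simp add: regular_cooling_def)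
  moreover have "dnz (cool G s)" if "0 \<le> s" for s
  proof (cases "s \<le> T")
    case True
    have "Rs (cool_tilde G s) \<le> Rs (cool_tilde G T)" "Ls (cool_tilde G T) \<le> Ls (cool_tilde G s)"
      using mono True unfolding cooling_mono_def by blast+
    moreover have "lopts G \<noteq> []" "ropts G \<noteq> []"
      using assms(1,2) by (simp_all add: dnz_lopts_Nil dnz_ropts_Nil)
    moreover have "\<forall>x\<in>set (lopts G) \<union> set (ropts G). dnz (shift c (cool x s))" for c
      using opts that by (auto simp: regular_cooling_def intro: dnz_shift)
    ultimately have "dnz (cool_tilde G s)"
      unfolding dnz_iff[of "cool_tilde G s"] using T(2) by auto
    then show ?thesis using True by (simp add: cool_G)
  qed (simp add: cool_G)
  ultimately show ?thesis by (simp add: regular_cooling_def)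
qed

lemma dnz_regular_cooling: "dnz G \<Longrightarrow> regular_cooling G"
proof (induction G)
  case (SG L l R r)
  define G where "G = SG L l R r"
  have "dnz G" using SG.prems by (simp add: G_def)
  have "regular_cooling G"
  proof (cases "is_num G")
    case True
    then have "cool G = (\<lambda>s. G)" by (simp add: cool_is_num fun_eq_iff)
    with \<open>dnz G\<close> show ?thesis by (simp add: regular_cooling_def cooling_mono_def)
  next
    case False
    have "regular_cooling x" if "x \<in> set (lopts G) \<union> set (ropts G)" for x
    proof -
      have "dnz x" using that \<open>dnz G\<close> dnz_lopt dnz_ropt by blast
      moreover have "x \<in> set L \<union> set R" using that by (simp add: G_def)
      ultimately show ?thesis using SG.IH by blast
    qed
    with \<open>dnz G\<close> False show ?thesis by (intro regular_cooling_step) auto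
  qed
  then show ?case by (simp add: G_def)
qed

lemma cooling_mono_cool: "dnz G \<Longrightarrow> cooling_mono (cool G)"
  and cool_0: "dnz G \<Longrightarrow> cool G 0 = G"
  and dnz_cool_at: "dnz G \<Longrightarrow> 0 \<le> s \<Longrightarrow> dnz (cool G s)"
  using dnz_regular_cooling by (auto simp: regular_cooling_def)

lemma dnz_temp_crossing:
  "dnz G \<Longrightarrow> \<not> is_num G \<Longrightarrow> 0 \<le> temp G \<and> Ls (cool_tilde G (temp G)) = Rs (cool_tilde G (temp G))"
  by (rule temp_crossing) (auto dest: dnz_lopt dnz_ropt dnz_regular_cooling)

lemma temp_nonneg: "dnz G \<Longrightarrow> 0 \<le> temp G"
  by (cases "is_num G") (simp_all add: temp_is_num dnz_temp_crossing)

definition frozen_value :: "sgame \<Rightarrow> real" where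
  "frozen_value G = Ls (cool G (temp G))"

lemma cool_above_temp: "temp G < t \<Longrightarrow> cool G t = num (frozen_value G)"
proof (cases "is_num G")
  case True
  then show ?thesis by (metis cool_is_num is_num_eq Ls_num frozen_value_def)
qed (simp add: cool_eq frozen_value_def)

lemma Ls_Rs_cool_frozen:
  assumes "dnz G" "temp G \<le> t"
  shows "Ls (cool G t) = frozen_value G \<and> Rs (cool G t) = frozen_value G"
proof (cases "temp G < t")
  case True
  then show ?thesis by (simp add: cool_above_temp)
next
  case False
  with assms(2) have "t = temp G" by simp
  then show ?thesis
    using dnz_temp_crossing[OF assms(1)]
    by (cases "is_num G") (simp_all add: cool_eq frozen_value_def Rs_is_num)
qed

lemma cool_hot:
  assumes "dnz G" "\<not> is_num G" "t \<le> temp G"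
  shows "cool G t = cool_tilde G t \<and> lopts (cool G t) \<noteq> [] \<and> ropts (cool G t) \<noteq> []"
  using assms by (simp add: cool_eq dnz_lopts_Nil dnz_ropts_Nil)

lemma cool_eq_cool_tilde_if_lopts: "lopts (cool G t) \<noteq> [] \<Longrightarrow> cool G t = cool_tilde G t"
  and cool_eq_cool_tilde_if_ropts: "ropts (cool G t) \<noteq> [] \<Longrightarrow> cool G t = cool_tilde G t"
  by (auto simp: cool_eq is_num_def split: if_splits)

lemma Rs_cool_lopt_le_frozen:
  assumes "dnz G" "x \<in> set (lopts G)" "temp G \<le> t"
  shows "Rs (cool x t) - t \<le> frozen_value G"
proof -
  have "\<not> is_num G" using assms(2) by (auto simp: is_num_def)
  have "Rs (cool x t) - t \<le> Rs (cool x (temp G)) - temp G"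
    using cooling_mono_cool[OF dnz_lopt[OF assms(1,2)]] assms(3) unfolding cooling_mono_def by blast
  also have "\<dots> = Rs (shift (- temp G) (cool x (temp G)))" by simp
  also have "\<dots> \<le> Ls (cool_tilde G (temp G))" using assms(2) by (intro Rs_lopt_le_Ls) simp
  also have "\<dots> = frozen_value G" using \<open>\<not> is_num G\<close> by (simp add: frozen_value_def cool_eq)
  finally show ?thesis .
qed

lemma frozen_le_Ls_cool_ropt:
  assumes "dnz G" "x \<in> set (ropts G)" "temp G \<le> t"
  shows "frozen_value G \<le> Ls (cool x t) + t"
proof -
  have "\<not> is_num G" using assms(2) by (auto simp: is_num_def)
  have "frozen_value G = Rs (cool_tilde G (temp G))"
    using dnz_temp_crossing[OF assms(1) \<open>\<not> is_num G\<close>] \<open>\<not> is_num G\<close>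
    by (simp add: frozen_value_def cool_eq)
  also have "\<dots> \<le> Ls (shift (temp G) (cool x (temp G)))" using assms(2) by (intro Rs_le_Ls_ropt) simp
  also have "\<dots> = Ls (cool x (temp G)) + temp G" by simp
  also have "\<dots> \<le> Ls (cool x t) + t"
    using cooling_mono_cool[OF dnz_ropt[OF assms(1,2)]] assms(3) unfolding cooling_mono_def by blast
  finally show ?thesis .
qed

section \<open>Sums of cooled games\<close>

abbreviation cool_each :: "real \<Rightarrow> sgame list \<Rightarrow> sgame list" where
  "cool_each t gs \<equiv> map (\<lambda>g. cool g t) gs"

lemma dnz_cool_each: "\<forall>g\<in>set gs. dnz g \<Longrightarrow> 0 \<le> t \<Longrightarrow> \<forall>g\<in>set (cool_each t gs). dnz g"
  by (auto intro: dnz_cool_at)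

lemma cool_each_0: "\<forall>g\<in>set gs. dnz g \<Longrightarrow> cool_each 0 gs = gs"
  by (intro map_idI) (simp add: cool_0)

lemma gsum_cool_each_frozen:
  assumes "\<forall>g\<in>set gs. dnz g" "\<forall>g\<in>set gs. temp g \<le> t"
  shows "Ls (gsum (cool_each t gs)) = (\<Sum>g\<leftarrow>gs. frozen_value g)
    \<and> Rs (gsum (cool_each t gs)) = (\<Sum>g\<leftarrow>gs. frozen_value g)"
proof -
  have "dnz (cool g t)" if "g \<in> set gs" for g
    using that assms temp_nonneg[of g] by (intro dnz_cool_at) auto
  then have dnz: "\<forall>c\<in>set (cool_each t gs). dnz c" by auto
  have "(\<Sum>g\<leftarrow>gs. Ls (cool g t)) = (\<Sum>g\<leftarrow>gs. frozen_value g)"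
    and "(\<Sum>g\<leftarrow>gs. Rs (cool g t)) = (\<Sum>g\<leftarrow>gs. frozen_value g)"
    using assms Ls_Rs_cool_frozen by (auto intro!: arg_cong[where f = sum_list])
  then have "Ls (gsum (cool_each t gs)) \<le> (\<Sum>g\<leftarrow>gs. frozen_value g)"
    and "(\<Sum>g\<leftarrow>gs. frozen_value g) \<le> Rs (gsum (cool_each t gs))"
    using Ls_gsum_le[OF dnz] Rs_gsum_ge[OF dnz] by (simp_all add: comp_def)
  moreover have "Rs (gsum (cool_each t gs)) \<le> Ls (gsum (cool_each t gs))"
    using dnz by (intro dnz_nonzugzwang dnz_gsum)
  ultimately show ?thesis by linarith
qed

lemma Ls_gsum_cool_each_le:
  assumes "lopts (gsum (cool_each t gs)) \<noteq> []"
    and IH: "\<And>j x. j < length gs \<Longrightarrow> x \<in> set (lopts (gs ! j))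
      \<Longrightarrow> Rs (gsum (cool_each t (gs[j := x]))) - t \<le> Rs (gsum (gs[j := x]))"
  shows "Ls (gsum (cool_each t gs)) \<le> Ls (gsum gs)"
proof -
  obtain z where z: "z \<in> set (lopts (gsum (cool_each t gs)))" "Ls (gsum (cool_each t gs)) = Rs z"
    using obtain_best_lopt assms(1) by blast
  then obtain j y where j: "j < length gs" "y \<in> set (lopts (cool (gs ! j) t))"
    "z = gsum ((cool_each t gs)[j := y])"
    unfolding lopts_gsum by auto
  then have "cool (gs ! j) t = cool_tilde (gs ! j) t"
    by (intro cool_eq_cool_tilde_if_lopts) auto
  with j obtain x where x: "x \<in> set (lopts (gs ! j))" "y = shift (- t) (cool x t)"
    by auto
  have "Rs z = Rs (gsum (cool_each t (gs[j := x]))) - t"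
    using j x by (simp add: gsum_update_shift map_update)
  also have "\<dots> \<le> Rs (gsum (gs[j := x]))"
    by (rule IH[OF j(1) x(1)])
  also have "\<dots> \<le> Ls (gsum gs)"
    using j(1) x(1) by (intro Rs_lopt_le_Ls lopt_gsum_update)
  finally show ?thesis using z(2) by simp
qed

lemma Rs_gsum_le_cool_each:
  assumes "ropts (gsum (cool_each t gs)) \<noteq> []"
    and IH: "\<And>j x. j < length gs \<Longrightarrow> x \<in> set (ropts (gs ! j))
      \<Longrightarrow> Ls (gsum (gs[j := x])) \<le> Ls (gsum (cool_each t (gs[j := x]))) + t"
  shows "Rs (gsum gs) \<le> Rs (gsum (cool_each t gs))"
proof -
  obtain z where z: "z \<in> set (ropts (gsum (cool_each t gs)))" "Rs (gsum (cool_each t gs)) = Ls z"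
    using obtain_best_ropt assms(1) by blast
  then obtain j y where j: "j < length gs" "y \<in> set (ropts (cool (gs ! j) t))"
    "z = gsum ((cool_each t gs)[j := y])"
    unfolding ropts_gsum by auto
  then have "cool (gs ! j) t = cool_tilde (gs ! j) t"
    by (intro cool_eq_cool_tilde_if_ropts) auto
  with j obtain x where x: "x \<in> set (ropts (gs ! j))" "y = shift t (cool x t)"
    by auto
  have "Rs (gsum gs) \<le> Ls (gsum (gs[j := x]))"
    using j(1) x(1) by (intro Rs_le_Ls_ropt ropt_gsum_update)
  also have "\<dots> \<le> Ls (gsum (cool_each t (gs[j := x]))) + t"
    by (rule IH[OF j(1) x(1)])
  also have "\<dots> = Ls z"
    using j x by (simp add: gsum_update_shift map_update)
  finally show ?thesis using z(2) by simp
qed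

text \<open>If component \<open>j\<close> is still hot at \<open>t\<close>, the cooled option shifted by \<open>-t\<close> is a Left option
  of the cooled sum; if it is frozen, it is a number, and the cooled option is bounded by its
  frozen value.\<close>

lemma Rs_gsum_cool_each_lopt_le:
  assumes dnz: "\<forall>g\<in>set gs. dnz g" and "0 \<le> t" "j < length gs" "x \<in> set (lopts (gs ! j))"
  shows "Rs (gsum (cool_each t (gs[j := x]))) \<le> Ls (gsum (cool_each t gs)) + t"
proof -
  define g where "g = gs ! j"
  have g: "dnz g" "\<not> is_num g" "x \<in> set (lopts g)"
    using assms(3,4) dnz by (auto simp: g_def is_num_def)
  show ?thesis
  proof (cases "t \<le> temp g")
    case True
    then have "shift (- t) (cool x t) \<in> set (lopts (cool g t))"
      using cool_hot[OF g(1,2) True] g(3) by simp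
    then have "Rs (gsum ((cool_each t gs)[j := shift (- t) (cool x t)]))
        \<le> Ls (gsum (cool_each t gs))"
      using assms(3) by (intro Rs_lopt_le_Ls lopt_gsum_update) (simp_all add: g_def)
    then show ?thesis
      using assms(3) by (simp add: gsum_update_shift map_update)
  next
    case False
    obtain rest where rest: "set rest \<subseteq> set (cool_each t gs)"
      and split: "\<And>y. Ls (gsum ((cool_each t gs)[j := y])) = Ls (gplus y (gsum rest))
        \<and> Rs (gsum ((cool_each t gs)[j := y])) = Rs (gplus y (gsum rest))"
      using obtain_gsum_update_rest[of j "cool_each t gs"] assms(3) by auto
    have "dnz (gsum rest)"
      using rest dnz_cool_each[OF dnz \<open>0 \<le> t\<close>] by (intro dnz_gsum) blast
    moreover have "dnz (cool x t)"
      using dnz_lopt[OF g(1,3)] \<open>0 \<le> t\<close> by (rule dnz_cool_at)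
    ultimately have "Rs (gsum (cool_each t (gs[j := x]))) \<le> Rs (cool x t) + Ls (gsum rest)"
      using split[of "cool x t"] Ls_Rs_gplus_le by (simp add: map_update)
    also have "\<dots> \<le> frozen_value g + t + Ls (gsum rest)"
      using Rs_cool_lopt_le_frozen[OF g(1,3), of t] False by simp
    also have "\<dots> = Ls (gsum ((cool_each t gs)[j := num (frozen_value g)])) + t"
      using split[of "num (frozen_value g)"] by (simp add: gplus_num_left)
    also have "(cool_each t gs)[j := num (frozen_value g)] = cool_each t gs"
      using assms(3) False by (simp add: list_update_same_conv cool_above_temp g_def)
    finally show ?thesis .
  qed
qed

lemma Rs_gsum_cool_each_le_ropt:
  assumes dnz: "\<forall>g\<in>set gs. dnz g" and "0 \<le> t" "j < length gs" "x \<in> set (ropts (gs ! j))"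
  shows "Rs (gsum (cool_each t gs)) - t \<le> Ls (gsum (cool_each t (gs[j := x])))"
proof -
  define g where "g = gs ! j"
  have g: "dnz g" "\<not> is_num g" "x \<in> set (ropts g)"
    using assms(3,4) dnz by (auto simp: g_def is_num_def)
  show ?thesis
  proof (cases "t \<le> temp g")
    case True
    then have "shift t (cool x t) \<in> set (ropts (cool g t))"
      using cool_hot[OF g(1,2) True] g(3) by simp
    then have "Rs (gsum (cool_each t gs)) \<le> Ls (gsum ((cool_each t gs)[j := shift t (cool x t)]))"
      using assms(3) by (intro Rs_le_Ls_ropt ropt_gsum_update) (simp_all add: g_def)
    then show ?thesis
      using assms(3) by (simp add: gsum_update_shift map_update)
  next
    case False
    obtain rest where rest: "set rest \<subseteq> set (cool_each t gs)"
      and split: "\<And>y. Ls (gsum ((cool_each t gs)[j := y])) = Ls (gplus y (gsum rest))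
        \<and> Rs (gsum ((cool_each t gs)[j := y])) = Rs (gplus y (gsum rest))"
      using obtain_gsum_update_rest[of j "cool_each t gs"] assms(3) by auto
    have "dnz (gsum rest)"
      using rest dnz_cool_each[OF dnz \<open>0 \<le> t\<close>] by (intro dnz_gsum) blast
    moreover have "dnz (cool x t)"
      using dnz_ropt[OF g(1,3)] \<open>0 \<le> t\<close> by (rule dnz_cool_at)
    moreover have "(cool_each t gs)[j := num (frozen_value g)] = cool_each t gs"
      using assms(3) False by (simp add: list_update_same_conv cool_above_temp g_def)
    ultimately have "Rs (gsum (cool_each t gs)) - t = frozen_value g - t + Rs (gsum rest)"
      using split[of "num (frozen_value g)"] by (simp add: gplus_num_left)
    also have "\<dots> \<le> Ls (cool x t) + Rs (gsum rest)"
      using frozen_le_Ls_cool_ropt[OF g(1,3), of t] False by simp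
    also have "\<dots> \<le> Ls (gsum (cool_each t (gs[j := x])))"
      using split[of "cool x t"] Ls_Rs_gplus_ge \<open>dnz (gsum rest)\<close> \<open>dnz (cool x t)\<close>
      by (simp add: map_update)
    finally show ?thesis .
  qed
qed

text \<open>When \<open>t\<close> exceeds every temperature, lowering it to the largest temperature of a component
  leaves the scores of the cooled sum unchanged and, unless all components are numbers, gives the
  cooled sum moves again.\<close>

lemma obtain_hot_cooling:
  assumes dnz: "\<forall>g\<in>set gs. dnz g" and "0 \<le> t"
  obtains T where "0 \<le> T"
    "Ls (gsum (cool_each t gs)) = Ls (gsum (cool_each T gs))"
    "Rs (gsum (cool_each t gs)) = Rs (gsum (cool_each T gs))"
    "T = 0 \<or> lopts (gsum (cool_each T gs)) \<noteq> [] \<and> ropts (gsum (cool_each T gs)) \<noteq> []"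
proof -
  have hot: "lopts (gsum (cool_each T gs)) \<noteq> [] \<and> ropts (gsum (cool_each T gs)) \<noteq> []"
    if "g \<in> set gs" "\<not> is_num g" "T \<le> temp g" for g T
    using that cool_hot[of g T] dnz by (auto simp: lopts_gsum_Nil ropts_gsum_Nil)
  show thesis
  proof (cases "\<exists>g\<in>set gs. \<not> is_num g \<and> t \<le> temp g")
    case True
    then show thesis using that[of t] hot \<open>0 \<le> t\<close> by blast
  next
    case False
    define T where "T = Max (insert 0 (temp ` set gs))"
    have "T \<le> t"
      using False \<open>0 \<le> t\<close> by (auto simp: T_def temp_is_num not_le intro: less_imp_le)
    moreover have "\<forall>g\<in>set gs. temp g \<le> T" "0 \<le> T"
      by (auto simp: T_def)
    ultimately have "Ls (gsum (cool_each t gs)) = Ls (gsum (cool_each T gs))"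
      "Rs (gsum (cool_each t gs)) = Rs (gsum (cool_each T gs))"
      using gsum_cool_each_frozen[OF dnz] by (metis order.trans)+
    moreover have "T = 0 \<or> lopts (gsum (cool_each T gs)) \<noteq> [] \<and> ropts (gsum (cool_each T gs)) \<noteq> []"
    proof (cases "T = 0")
      case False
      moreover have "T \<in> insert 0 (temp ` set gs)"
        unfolding T_def by (intro Max_in) auto
      ultimately obtain g where "g \<in> set gs" "T = temp g" by auto
      with False show ?thesis
        using hot[of g T] temp_is_num[of g] by auto
    qed simp
    ultimately show thesis using that \<open>0 \<le> T\<close> by blast
  qed
qed

lemma Ls_gsum_le_cool_each_plus:
  assumes dnz: "\<forall>g\<in>set gs. dnz g" and "0 \<le> t"
    and IH: "\<And>j x. j < length gs \<Longrightarrow> x \<in> set (lopts (gs ! j))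
      \<Longrightarrow> Rs (gsum (gs[j := x])) \<le> Rs (gsum (cool_each t (gs[j := x])))"
  shows "Ls (gsum gs) \<le> Ls (gsum (cool_each t gs)) + t"
proof (cases "lopts (gsum gs) = []")
  case True
  then have "cool_each t gs = gs"
    using dnz by (auto simp: lopts_gsum_Nil dnz_lopts_Nil cool_is_num intro!: map_idI)
  then show ?thesis using \<open>0 \<le> t\<close> by simp
next
  case False
  then obtain z where "z \<in> set (lopts (gsum gs))" "Ls (gsum gs) = Rs z"
    by (rule obtain_best_lopt)
  then obtain j x where j: "j < length gs" "x \<in> set (lopts (gs ! j))" "z = gsum (gs[j := x])"
    unfolding lopts_gsum by blast
  have "Rs z \<le> Rs (gsum (cool_each t (gs[j := x])))"
    using IH j by simp
  also have "\<dots> \<le> Ls (gsum (cool_each t gs)) + t"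
    by (rule Rs_gsum_cool_each_lopt_le[OF dnz \<open>0 \<le> t\<close> j(1,2)])
  finally show ?thesis using \<open>Ls (gsum gs) = Rs z\<close> by simp
qed

lemma Rs_gsum_cool_each_minus_le:
  assumes dnz: "\<forall>g\<in>set gs. dnz g" and "0 \<le> t"
    and IH: "\<And>j x. j < length gs \<Longrightarrow> x \<in> set (ropts (gs ! j))
      \<Longrightarrow> Ls (gsum (cool_each t (gs[j := x]))) \<le> Ls (gsum (gs[j := x]))"
  shows "Rs (gsum (cool_each t gs)) - t \<le> Rs (gsum gs)"
proof (cases "ropts (gsum gs) = []")
  case True
  then have "cool_each t gs = gs"
    using dnz by (auto simp: ropts_gsum_Nil dnz_ropts_Nil cool_is_num intro!: map_idI)
  then show ?thesis using \<open>0 \<le> t\<close> by simp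
next
  case False
  then obtain z where "z \<in> set (ropts (gsum gs))" "Rs (gsum gs) = Ls z"
    by (rule obtain_best_ropt)
  then obtain j x where j: "j < length gs" "x \<in> set (ropts (gs ! j))" "z = gsum (gs[j := x])"
    unfolding ropts_gsum by blast
  have "Rs (gsum (cool_each t gs)) - t \<le> Ls (gsum (cool_each t (gs[j := x])))"
    by (rule Rs_gsum_cool_each_le_ropt[OF dnz \<open>0 \<le> t\<close> j(1,2)])
  also have "\<dots> \<le> Ls z"
    using IH j by simp
  finally show ?thesis using \<open>Rs (gsum gs) = Ls z\<close> by simp
qed

lemma gsum_cool_each_bounds:
  assumes "\<forall>g\<in>set gs. dnz g" "0 \<le> t"
  shows "Ls (gsum (cool_each t gs)) \<le> Ls (gsum gs) \<and> Ls (gsum gs) \<le> Ls (gsum (cool_each t gs)) + t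
    \<and> Rs (gsum (cool_each t gs)) - t \<le> Rs (gsum gs) \<and> Rs (gsum gs) \<le> Rs (gsum (cool_each t gs))"
  using assms
proof (induction "size (gsum gs)" arbitrary: gs t rule: less_induct)
  case less
  note dnz = less.prems(1)
  have IH: "Ls (gsum (cool_each t' (gs[j := x]))) \<le> Ls (gsum (gs[j := x]))
    \<and> Ls (gsum (gs[j := x])) \<le> Ls (gsum (cool_each t' (gs[j := x]))) + t'
    \<and> Rs (gsum (cool_each t' (gs[j := x]))) - t' \<le> Rs (gsum (gs[j := x]))
    \<and> Rs (gsum (gs[j := x])) \<le> Rs (gsum (cool_each t' (gs[j := x])))"
    if "j < length gs" "x \<in> set (lopts (gs ! j)) \<union> set (ropts (gs ! j))" "0 \<le> t'" for j x t'
  proof (rule less.hyps)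
    show "size (gsum (gs[j := x])) < size (gsum gs)"
      using that(2) size_lopt_less[OF lopt_gsum_update[OF that(1)]]
        size_ropt_less[OF ropt_gsum_update[OF that(1)]] by blast
    have "gs ! j \<in> set gs" using that(1) by simp
    then have "dnz x" using that(2) dnz dnz_lopt dnz_ropt by blast
    then show "\<forall>g\<in>set (gs[j := x]). dnz g"
      using dnz set_update_subset_insert[of gs j x] by blast
  qed (rule that(3))
  have hot: "Ls (gsum (cool_each T gs)) \<le> Ls (gsum gs) \<and> Rs (gsum gs) \<le> Rs (gsum (cool_each T gs))"
    if "0 \<le> T" "lopts (gsum (cool_each T gs)) \<noteq> []" "ropts (gsum (cool_each T gs)) \<noteq> []" for T
  proof
    show "Ls (gsum (cool_each T gs)) \<le> Ls (gsum gs)"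
      by (rule Ls_gsum_cool_each_le[OF that(2)]) (simp add: IH that(1))
    show "Rs (gsum gs) \<le> Rs (gsum (cool_each T gs))"
      by (rule Rs_gsum_le_cool_each[OF that(3)]) (simp add: IH that(1))
  qed
  obtain T where "0 \<le> T" "Ls (gsum (cool_each t gs)) = Ls (gsum (cool_each T gs))"
    "Rs (gsum (cool_each t gs)) = Rs (gsum (cool_each T gs))"
    "T = 0 \<or> lopts (gsum (cool_each T gs)) \<noteq> [] \<and> ropts (gsum (cool_each T gs)) \<noteq> []"
    using obtain_hot_cooling[OF dnz less.prems(2)] by blast
  then have "Ls (gsum (cool_each t gs)) \<le> Ls (gsum gs) \<and> Rs (gsum gs) \<le> Rs (gsum (cool_each t gs))"
    using hot cool_each_0[OF dnz] by auto
  moreover have "Ls (gsum gs) \<le> Ls (gsum (cool_each t gs)) + t"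
    by (rule Ls_gsum_le_cool_each_plus[OF dnz less.prems(2)]) (simp add: IH less.prems(2))
  moreover have "Rs (gsum (cool_each t gs)) - t \<le> Rs (gsum gs)"
    by (rule Rs_gsum_cool_each_minus_le[OF dnz less.prems(2)]) (simp add: IH less.prems(2))
  ultimately show ?case by blast
qed

lemma gsum_bounds_frozen_values:
  assumes "\<forall>g\<in>set gs. dnz g" "\<forall>g\<in>set gs. temp g \<le> t" "0 \<le> t"
  shows "(\<Sum>g\<leftarrow>gs. frozen_value g) - t \<le> Rs (gsum gs) \<and> Rs (gsum gs) \<le> (\<Sum>g\<leftarrow>gs. frozen_value g)
    \<and> (\<Sum>g\<leftarrow>gs. frozen_value g) \<le> Ls (gsum gs) \<and> Ls (gsum gs) \<le> (\<Sum>g\<leftarrow>gs. frozen_value g) + t"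
  using gsum_cool_each_bounds[OF assms(1,3)] gsum_cool_each_frozen[OF assms(1,2)] by auto

section \<open>The mean\<close>

lemma ncopies_eq_gsum: "ncopies n G = gsum (replicate n G)"
  by (induction n G rule: ncopies.induct) (simp_all add: gsum_Cons gplus_num_right)

lemma mean_eq_frozen_value:
  assumes "dnz G"
  shows "mean G = frozen_value G"
proof -
  have bounds: "frozen_value G \<le> Ls (ncopies n G) / n
      \<and> Ls (ncopies n G) / n \<le> frozen_value G + temp G / n"
    if "0 < n" for n
  proof -
    have "n * frozen_value G \<le> Ls (ncopies n G) \<and> Ls (ncopies n G) \<le> n * frozen_value G + temp G"
      using gsum_bounds_frozen_values[of "replicate n G" "temp G"] assms temp_nonneg[OF assms]
      by (simp add: ncopies_eq_gsum sum_list_replicate)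
    with that show ?thesis by (simp add: field_simps)
  qed
  have "(\<lambda>n. Ls (ncopies n G) / n) \<longlonglongrightarrow> frozen_value G"
  proof (rule tendsto_sandwich)
    show "\<forall>\<^sub>F n in sequentially. frozen_value G \<le> Ls (ncopies n G) / n"
      "\<forall>\<^sub>F n in sequentially. Ls (ncopies n G) / n \<le> frozen_value G + temp G / n"
      using bounds by (auto simp: eventually_sequentially intro!: exI[of _ 1])
    show "(\<lambda>n. frozen_value G + temp G / n) \<longlonglongrightarrow> frozen_value G"
      using tendsto_add[OF tendsto_const lim_const_over_n] by simp
  qed simp
  then show ?thesis unfolding mean_def by (rule limI)
qed

theorem mainTheorem6:
  fixes Gs :: "sgame list"
  assumes "Gs \<noteq> []"
    and "\<forall>g\<in>set Gs. dicotic g \<and> nonzugzwang g \<and> terminal_numbers g"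
  shows "(\<Sum>g\<leftarrow>Gs. mean g) - Max (temp ` set Gs) \<le> Rs (gsum Gs)
       \<and> Rs (gsum Gs) \<le> (\<Sum>g\<leftarrow>Gs. mean g)
       \<and> (\<Sum>g\<leftarrow>Gs. mean g) \<le> Ls (gsum Gs)
       \<and> Ls (gsum Gs) \<le> (\<Sum>g\<leftarrow>Gs. mean g) + Max (temp ` set Gs)"
proof -
  have dnz: "\<forall>g\<in>set Gs. dnz g"
    using assms(2) by (simp add: dnz_def)
  have temps: "\<forall>g\<in>set Gs. temp g \<le> Max (temp ` set Gs)"
    by simp
  obtain g where "g \<in> set Gs"
    using assms(1) by (meson last_in_set)
  then have "0 \<le> Max (temp ` set Gs)"
    using dnz temps temp_nonneg order.trans by blast
  moreover have "(\<Sum>g\<leftarrow>Gs. mean g) = (\<Sum>g\<leftarrow>Gs. frozen_value g)"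
    using dnz mean_eq_frozen_value by (auto intro!: arg_cong[where f = sum_list])
  ultimately show ?thesis
    using gsum_bounds_frozen_values[OF dnz temps] by simp
qed

end
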